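(* Let $n\ge2$, $A\in\mathbb{R}^{n\times n}$ symmetric with eigenvalues $\lambda_1\ge\dots\ge\lambda_n$, $\rho=\lambda_1-\lambda_n$, $\delta:=\lambda_{n-1}-\lambda_n>0$, $\gamma>0$ and $0<\beta\le\big[2(\frac73+\gamma)+(\frac23+\gamma)\frac{\rho}{\delta}\big]^{-1}\delta$. Then $f(\mathbf{z})=\frac12\mathbf{z}^TA\mathbf{z}+\frac{\beta}{2}\sum_kz_k^4$ has exactly two local minimizers on $\mathbb{S}^{n-1}$, and both are global minimizers.
   Context: $\mathbb{S}^{n-1}$ is the unit sphere in $\mathbb{R}^n$. *)

theory Defs
  imports Complex_Main "Jordan_Normal_Form.Char_Poly"
begin

definition unit_sphere :: "nat \<Rightarrow> real vec set" where
  "unit_sphere n = {z. z \<in> carrier_vec n \<and> z \<bullet> z = 1}"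

definition vdist :: "real vec \<Rightarrow> real vec \<Rightarrow> real" where
  "vdist z w = sqrt ((z - w) \<bullet> (z - w))"

definition obj :: "real mat \<Rightarrow> real \<Rightarrow> real vec \<Rightarrow> real" where
  "obj A \<beta> z = (1/2) * (z \<bullet> (A *\<^sub>v z)) + (\<beta>/2) * (\<Sum>k<dim_vec z. (z $ k) ^ 4)"

definition local_minimizer_on :: "(real vec \<Rightarrow> real) \<Rightarrow> real vec set \<Rightarrow> real vec \<Rightarrow> bool" where
  "local_minimizer_on f S z \<longleftrightarrow> z \<in> S \<and>
     (\<exists>\<epsilon>>0. \<forall>w\<in>S. vdist w z < \<epsilon> \<longrightarrow> f z \<le> f w)"

definition global_minimizer_on :: "(real vec \<Rightarrow> real) \<Rightarrow> real vec set \<Rightarrow> real vec \<Rightarrow> bool" where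
  "global_minimizer_on f S z \<longleftrightarrow> z \<in> S \<and> (\<forall>w\<in>S. f z \<le> f w)"

end

theory Submission
  imports Defs "HOL-Analysis.Function_Topology" "Jordan_Normal_Form.Schur_Decomposition"
begin

text \<open>Let \<open>v\<close> be a unit eigenvector of the simple smallest eigenvalue \<open>\<mu>\<close> of \<open>A\<close>, let
  \<open>\<delta>\<close> be the spectral gap and \<open>\<rho>\<close> the spectral width. Restricting \<open>f\<close> to great circles
  through \<open>v\<close>, the first- and second-order conditions at a local minimizer \<open>z\<close> give
  \<open>\<delta>\<^sup>2 (1 - (v \<bullet> z)\<^sup>2) \<le> 2 \<beta>\<^sup>2\<close>, so all local minimizers lie in two small caps around \<open>\<plusminus>v\<close>.
  On these caps the second derivative of \<open>f\<close> along every great circle is positive. Two distinct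
  local minimizers in the same cap would be joined by an arc inside the cap along which the
  derivative of \<open>f\<close> vanishes at both ends but strictly increases; hence each cap contains at most
  one local minimizer. Since \<open>f\<close> is even and attains its minimum, the local minimizers are
  exactly a global minimizer and its negative.\<close>

lemma scalar_prod_self_nonneg: "0 \<le> (x::real vec) \<bullet> x"
  unfolding scalar_prod_def by (auto intro: sum_nonneg)

lemma scalar_prod_self_eq_0:
  assumes "(x::real vec) \<in> carrier_vec n" "x \<bullet> x = 0"
  shows "x = 0\<^sub>v n"
proof -
  have "\<forall>i\<in>{0..<n}. x $ i * x $ i = 0"
    using assms by (subst sum_nonneg_eq_0_iff[symmetric]) (auto simp: scalar_prod_def)
  thus ?thesis using assms by (intro eq_vecI) auto
qed

lemma scalar_prod_self_pos:
  assumes "(x::real vec) \<in> carrier_vec n" "x \<noteq> 0\<^sub>v n"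
  shows "0 < x \<bullet> x"
  using assms scalar_prod_self_eq_0 scalar_prod_self_nonneg[of x] by force

lemma scalar_prod_sum:
  "(x::real vec) \<in> carrier_vec n \<Longrightarrow> y \<in> carrier_vec n \<Longrightarrow> x \<bullet> y = (\<Sum>k<n. x $ k * y $ k)"
  unfolding scalar_prod_def by (simp add: atLeast0LessThan)

lemma scalar_prod_lincomb2:
  assumes x: "(x::real vec) \<in> carrier_vec n" and y: "y \<in> carrier_vec n"
  shows "(a \<cdot>\<^sub>v x + b \<cdot>\<^sub>v y) \<bullet> (c \<cdot>\<^sub>v x + d \<cdot>\<^sub>v y) =
     a * c * (x \<bullet> x) + (a * d + b * c) * (x \<bullet> y) + b * d * (y \<bullet> y)"
proof -
  have "y \<bullet> x = x \<bullet> y" using x y by (rule comm_scalar_prod[symmetric])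
  then show ?thesis using x y
    by (simp add: scalar_prod_add_distrib[of _ n] add_scalar_prod_distrib[of _ n] algebra_simps)
qed

lemma normalize_in_unit_sphere:
  assumes "(y::real vec) \<in> carrier_vec n" "y \<noteq> 0\<^sub>v n"
  shows "(1 / sqrt (y \<bullet> y)) \<cdot>\<^sub>v y \<in> unit_sphere n"
proof -
  have pos: "y \<bullet> y > 0" by (rule scalar_prod_self_pos[OF assms])
  have "((1 / sqrt (y \<bullet> y)) \<cdot>\<^sub>v y) \<bullet> ((1 / sqrt (y \<bullet> y)) \<cdot>\<^sub>v y) = (1 / sqrt (y \<bullet> y))^2 * (y \<bullet> y)"
    using assms by (simp add: power2_eq_square)
  also have "\<dots> = 1" using pos by (simp add: power_divide)
  finally show ?thesis using assms unfolding unit_sphere_def by simp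
qed

lemma unit_vec_in_unit_sphere: "i < n \<Longrightarrow> unit_vec n i \<in> unit_sphere n"
  unfolding unit_sphere_def by (simp add: scalar_prod_left_unit)

definition orthonormal_pair :: "nat \<Rightarrow> real vec \<Rightarrow> real vec \<Rightarrow> bool" where
  "orthonormal_pair n x y \<longleftrightarrow>
     x \<in> carrier_vec n \<and> y \<in> carrier_vec n \<and> x \<bullet> x = 1 \<and> y \<bullet> y = 1 \<and> x \<bullet> y = 0"

lemma orthonormal_pairD:
  assumes "orthonormal_pair n x y"
  shows "x \<in> carrier_vec n" "y \<in> carrier_vec n" "x \<bullet> x = 1" "y \<bullet> y = 1" "x \<bullet> y = 0"
  using assms unfolding orthonormal_pair_def by auto

lemma orthonormal_pair_bessel:
  assumes o: "orthonormal_pair n u w" and e: "e \<in> carrier_vec n"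
  shows "(e \<bullet> u)^2 + (e \<bullet> w)^2 \<le> e \<bullet> e"
proof -
  note uw = orthonormal_pairD[OF o]
  define a where "a = e \<bullet> u"
  define b where "b = e \<bullet> w"
  define p where "p = (- a) \<cdot>\<^sub>v u + (- b) \<cdot>\<^sub>v w"
  have p: "p \<in> carrier_vec n" unfolding p_def using uw by auto
  have pp: "p \<bullet> p = a^2 + b^2"
    unfolding p_def scalar_prod_lincomb2[OF uw(1,2)] uw(3-5) by (simp add: power2_eq_square)
  have ep: "e \<bullet> p = - (a^2) - b^2"
    unfolding p_def using e uw by (simp add: scalar_prod_add_distrib[of _ n] a_def b_def power2_eq_square)
  have "(e + p) \<bullet> (e + p) = e \<bullet> e - a^2 - b^2"
    using e p comm_scalar_prod[OF p e] pp ep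
    by (simp add: scalar_prod_add_distrib[of _ n] add_scalar_prod_distrib[of _ n])
  with scalar_prod_self_nonneg[of "e + p"] show ?thesis unfolding a_def b_def by simp
qed

lemma orthonormal_pair_coordinates:
  assumes "orthonormal_pair n p q" "k < n"
  shows "(p $ k)^2 + (q $ k)^2 \<le> 1"
proof -
  have "(unit_vec n k \<bullet> p)^2 + (unit_vec n k \<bullet> q)^2 \<le> unit_vec n k \<bullet> unit_vec n k"
    by (rule orthonormal_pair_bessel[OF assms(1)]) simp
  thus ?thesis using assms orthonormal_pairD[OF assms(1)] by (simp add: scalar_prod_left_unit)
qed

lemma quartic_coordinate_bounds:
  fixes a b :: real
  assumes ab: "a^2 + b^2 \<le> 1"
  shows "\<bar>a^3 * b\<bar> \<le> a^2 / 2" "a^2 * b^2 \<le> (a^2 + b^2) / 4" "a^4 \<le> a^2"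
proof -
  have "2 * \<bar>a\<bar> * \<bar>b\<bar> \<le> a^2 + b^2" using sum_squares_bound[of "\<bar>a\<bar>" "\<bar>b\<bar>"] by simp
  hence "a^2 * (2 * \<bar>a\<bar> * \<bar>b\<bar>) \<le> a^2 * 1" using ab by (intro mult_left_mono) auto
  thus "\<bar>a^3 * b\<bar> \<le> a^2 / 2" by (simp add: abs_mult power2_eq_square power3_eq_cube)
  have "4 * (a^2 * b^2) \<le> (a^2 + b^2)^2" using sum_squares_bound[of "a^2" "b^2"]
    by (simp add: power2_sum)
  also have "\<dots> \<le> a^2 + b^2" using ab by (simp add: power2_eq_square mult_left_le)
  finally show "a^2 * b^2 \<le> (a^2 + b^2) / 4" by simp
  have "a^2 \<le> 1" using ab zero_le_power2[of b] by linarith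
  hence "a^2 * a^2 \<le> a^2 * 1" by (intro mult_left_mono) auto
  thus "a^4 \<le> a^2" by (simp add: power4_eq_xxxx power2_eq_square)
qed

lemma orthonormal_pair_quartic_bounds:
  assumes o: "orthonormal_pair n p q"
  shows "\<bar>\<Sum>k<n. (p $ k)^3 * q $ k\<bar> \<le> 1/2"
    and "-1 \<le> (\<Sum>k<n. 3 * (p $ k)^2 * (q $ k)^2 - (p $ k)^4)"
    and "(\<Sum>k<n. 3 * (p $ k)^2 * (q $ k)^2 - (p $ k)^4) \<le> 3/2"
proof -
  note pq = orthonormal_pairD[OF o]
  note bd = quartic_coordinate_bounds[OF orthonormal_pair_coordinates[OF o]]
  have sp: "(\<Sum>k<n. (p $ k)^2) = 1" and sq: "(\<Sum>k<n. (q $ k)^2) = 1"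
    using pq scalar_prod_sum[OF pq(1,1)] scalar_prod_sum[OF pq(2,2)] by (simp_all add: power2_eq_square)
  have "\<bar>\<Sum>k<n. (p $ k)^3 * q $ k\<bar> \<le> (\<Sum>k<n. \<bar>(p $ k)^3 * q $ k\<bar>)"
    by (rule sum_abs)
  also have "\<dots> \<le> (\<Sum>k<n. (p $ k)^2 / 2)"
    using bd(1) by (intro sum_mono) auto
  finally show "\<bar>\<Sum>k<n. (p $ k)^3 * q $ k\<bar> \<le> 1/2"
    using sp by (simp add: sum_divide_distrib[symmetric])
  have "- ((p $ k)^2) \<le> 3 * (p $ k)^2 * (q $ k)^2 - (p $ k)^4" if "k < n" for k
  proof -
    have "0 \<le> 3 * (p $ k)^2 * (q $ k)^2" by simp
    with bd(3)[OF that] show ?thesis by linarith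
  qed
  hence "(\<Sum>k<n. - ((p $ k)^2)) \<le> (\<Sum>k<n. 3 * (p $ k)^2 * (q $ k)^2 - (p $ k)^4)"
    by (intro sum_mono) auto
  thus "-1 \<le> (\<Sum>k<n. 3 * (p $ k)^2 * (q $ k)^2 - (p $ k)^4)" using sp by (simp add: sum_negf)
  have "3 * (p $ k)^2 * (q $ k)^2 - (p $ k)^4 \<le> 3/4 * (p $ k)^2 + 3/4 * (q $ k)^2" if "k < n" for k
  proof -
    have "0 \<le> (p $ k)^4" by simp
    with bd(2)[OF that] show ?thesis by argo
  qed
  hence "(\<Sum>k<n. 3 * (p $ k)^2 * (q $ k)^2 - (p $ k)^4) \<le> (\<Sum>k<n. 3/4 * (p $ k)^2 + 3/4 * (q $ k)^2)"
    by (intro sum_mono) auto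
  also have "\<dots> = 3/4 * (\<Sum>k<n. (p $ k)^2) + 3/4 * (\<Sum>k<n. (q $ k)^2)"
    by (simp add: sum.distrib sum_distrib_left)
  finally show "(\<Sum>k<n. 3 * (p $ k)^2 * (q $ k)^2 - (p $ k)^4) \<le> 3/2" using sp sq by simp
qed

section \<open>Great circles\<close>

definition great_circle :: "real vec \<Rightarrow> real vec \<Rightarrow> real \<Rightarrow> real vec" where
  "great_circle x u t = cos t \<cdot>\<^sub>v x + sin t \<cdot>\<^sub>v u"

definition great_circle_tangent :: "real vec \<Rightarrow> real vec \<Rightarrow> real \<Rightarrow> real vec" where
  "great_circle_tangent x u t = (- sin t) \<cdot>\<^sub>v x + cos t \<cdot>\<^sub>v u"

context
  fixes n :: nat and x u :: "real vec"
  assumes x: "x \<in> carrier_vec n" and u: "u \<in> carrier_vec n"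
begin

lemma great_circle_carrier [simp]: "great_circle x u t \<in> carrier_vec n"
  and great_circle_tangent_carrier [simp]: "great_circle_tangent x u t \<in> carrier_vec n"
  unfolding great_circle_def great_circle_tangent_def using x u by auto

lemma great_circle_index: "k < n \<Longrightarrow> great_circle x u t $ k = cos t * x $ k + sin t * u $ k"
  and great_circle_tangent_index:
    "k < n \<Longrightarrow> great_circle_tangent x u t $ k = - sin t * x $ k + cos t * u $ k"
  unfolding great_circle_def great_circle_tangent_def using x u by auto

lemma great_circle_0 [simp]: "great_circle x u 0 = x"
  unfolding great_circle_def using x u by (intro eq_vecI) auto

lemma scalar_prod_great_circle:
  "w \<in> carrier_vec n \<Longrightarrow> w \<bullet> great_circle x u t = cos t * (w \<bullet> x) + sin t * (w \<bullet> u)"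
  unfolding great_circle_def using x u by (simp add: scalar_prod_add_distrib[of _ n])

end

lemma great_circle_orthonormal:
  assumes "orthonormal_pair n x u"
  shows "orthonormal_pair n (great_circle x u t) (great_circle_tangent x u t)"
proof -
  note xu = orthonormal_pairD[OF assms]
  have c2: "cos t * cos t + sin t * sin t = 1" using sin_cos_squared_add[of t] by (simp add: power2_eq_square)
  show ?thesis using xu c2
    unfolding orthonormal_pair_def great_circle_def great_circle_tangent_def scalar_prod_lincomb2[OF xu(1,2)]
    by (simp add: algebra_simps)
qed

lemma great_circle_in_sphere: "orthonormal_pair n x u \<Longrightarrow> great_circle x u t \<in> unit_sphere n"
  using orthonormal_pairD[OF great_circle_orthonormal] unfolding unit_sphere_def by blast

lemma two_minus_two_cos_le: "2 - 2 * cos (h::real) \<le> h^2"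
proof -
  have "\<bar>sin (h/2)\<bar> \<le> \<bar>h/2\<bar>" by (rule abs_sin_x_le_abs_x)
  hence "(sin (h/2))^2 \<le> (h/2)^2" by (metis abs_le_square_iff)
  moreover have "cos h = 1 - 2 * (sin (h/2))^2" using cos_double_sin[of "h/2"] by simp
  ultimately show ?thesis by (simp add: power_divide)
qed

lemma vdist_great_circle_le:
  assumes "orthonormal_pair n x u"
  shows "vdist (great_circle x u s) (great_circle x u t) \<le> \<bar>s - t\<bar>"
proof -
  note xu = orthonormal_pairD[OF assms]
  have diff: "great_circle x u s - great_circle x u t = (cos s - cos t) \<cdot>\<^sub>v x + (sin s - sin t) \<cdot>\<^sub>v u"
    unfolding great_circle_def using xu by (intro eq_vecI) (auto simp: algebra_simps)
  have "(great_circle x u s - great_circle x u t) \<bullet> (great_circle x u s - great_circle x u t)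
      = 2 - 2 * cos (s - t)"
    unfolding diff scalar_prod_lincomb2[OF xu(1,2)] xu(3-5) cos_diff
    using sin_cos_squared_add[of s] sin_cos_squared_add[of t] by (simp add: power2_diff algebra_simps)
  also have "\<dots> \<le> (s - t)^2" by (rule two_minus_two_cos_le)
  finally show ?thesis unfolding vdist_def by (metis real_sqrt_abs real_sqrt_le_mono)
qed

lemma unit_sphere_scalar_prod_bounds:
  assumes x: "x \<in> unit_sphere n" and z: "z \<in> unit_sphere n" and "z \<noteq> x" "z \<noteq> - x"
  shows "-1 < x \<bullet> z" "x \<bullet> z < 1"
proof -
  have xc: "x \<in> carrier_vec n" "x \<bullet> x = 1" and zc: "z \<in> carrier_vec n" "z \<bullet> z = 1"
    using x z unfolding unit_sphere_def by auto
  have sq: "(1 \<cdot>\<^sub>v z + c \<cdot>\<^sub>v x) \<bullet> (1 \<cdot>\<^sub>v z + c \<cdot>\<^sub>v x) = 1 + 2 * c * (x \<bullet> z) + c^2" for c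
    unfolding scalar_prod_lincomb2[OF zc(1) xc(1)] using xc zc comm_scalar_prod[OF zc(1) xc(1)]
    by (simp add: power2_eq_square)
  have ne0: "1 \<cdot>\<^sub>v z + c \<cdot>\<^sub>v x \<noteq> 0\<^sub>v n" if "c = 1 \<or> c = -1" for c
  proof
    assume eq: "1 \<cdot>\<^sub>v z + c \<cdot>\<^sub>v x = 0\<^sub>v n"
    have "z = (- c) \<cdot>\<^sub>v x"
    proof (rule eq_vecI)
      fix i assume "i < dim_vec ((- c) \<cdot>\<^sub>v x)"
      thus "z $ i = ((- c) \<cdot>\<^sub>v x) $ i" using arg_cong[OF eq, of "\<lambda>w. w $ i"] xc zc by simp
    qed (use xc zc in simp)
    moreover have "(-1) \<cdot>\<^sub>v x = - x" using xc by (intro eq_vecI) auto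
    ultimately show False using that assms(3,4) by auto
  qed
  have "0 < 1 + 2 * c * (x \<bullet> z) + c^2" if "c = 1 \<or> c = -1" for c
    unfolding sq[symmetric] by (rule scalar_prod_self_pos[OF _ ne0[OF that]]) (use xc zc in simp)
  from this[of 1] this[of "-1"] show "-1 < x \<bullet> z" "x \<bullet> z < 1" by simp_all
qed

lemma great_circle_through:
  assumes x: "x \<in> unit_sphere n" and z: "z \<in> unit_sphere n" and "z \<noteq> x" "z \<noteq> - x"
  obtains u L where "orthonormal_pair n x u" "0 < L" "L < pi" "great_circle x u L = z"
proof
  have xc: "x \<in> carrier_vec n" "x \<bullet> x = 1" and zc: "z \<in> carrier_vec n" "z \<bullet> z = 1"
    using x z unfolding unit_sphere_def by auto
  note bounds = unit_sphere_scalar_prod_bounds[OF assms]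
  define k where "k = x \<bullet> z"
  define L where "L = arccos k"
  show L: "0 < L" "L < pi" unfolding L_def k_def using arccos_lt_bounded[OF bounds] by auto
  have cL: "cos L = k" unfolding L_def using bounds k_def by (simp add: cos_arccos)
  have sL: "sin L > 0" using L by (intro sin_gt_zero) auto
  have sL2: "(sin L)^2 = 1 - k^2" using sin_cos_squared_add[of L] cL by simp
  define w where "w = (-k) \<cdot>\<^sub>v x + 1 \<cdot>\<^sub>v z"
  define u where "u = (1 / sin L) \<cdot>\<^sub>v w"
  have w: "w \<in> carrier_vec n" unfolding w_def using xc zc by simp
  have "w \<bullet> w = (sin L)^2"
    unfolding w_def scalar_prod_lincomb2[OF xc(1) zc(1)] xc(2) zc(2) sL2 k_def[symmetric]
    by (simp add: power2_eq_square)
  hence "u \<bullet> u = 1" unfolding u_def using w sL by (simp add: power2_eq_square)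
  moreover have "x \<bullet> u = 0"
    unfolding u_def w_def using xc zc k_def by (simp add: scalar_prod_add_distrib[of _ n])
  moreover have "u \<in> carrier_vec n" unfolding u_def using w by simp
  ultimately show "orthonormal_pair n x u" unfolding orthonormal_pair_def using xc by simp
  show "great_circle x u L = z"
    unfolding great_circle_def u_def w_def cL using xc zc sL by (intro eq_vecI) (auto simp: field_simps)
qed

lemma sin_le_sin_diff_add_sin:
  assumes L: "0 < L" "L < pi" and t: "0 \<le> t" "t \<le> L"
  shows "sin L \<le> sin (L - t) + sin t"
proof -
  have "sin (L - t) + sin t = 2 * sin (L/2) * cos ((L - 2*t)/2)"
    using sin_plus_sin[of "L - t" t] by (simp add: algebra_simps)
  moreover have "sin L = 2 * sin (L/2) * cos (L/2)" using sin_double[of "L/2"] by simp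
  moreover have "sin (L/2) > 0" using L by (intro sin_gt_zero) auto
  moreover have "cos (L/2) \<le> cos \<bar>(L - 2*t)/2\<bar>" using L t by (subst cos_mono_le_eq) auto
  ultimately show ?thesis by (simp add: abs_if split: if_splits)
qed

text \<open>The value at \<open>t\<close> combines the two end values with the nonnegative weights
  \<open>sin (L - t) / sin L\<close> and \<open>sin t / sin L\<close>, whose sum is at least 1.\<close>
lemma great_circle_scalar_prod_ge:
  assumes x: "x \<in> carrier_vec n" and u: "u \<in> carrier_vec n" and w: "w \<in> carrier_vec n"
    and L: "0 < L" "L < pi" and t: "0 \<le> t" "t \<le> L"
    and a: "0 \<le> a" "a \<le> w \<bullet> x" "a \<le> w \<bullet> great_circle x u L"
  shows "a \<le> w \<bullet> great_circle x u t"
proof -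
  have sL: "sin L > 0" using L by (intro sin_gt_zero) auto
  have "sin L * a \<le> sin (L - t) * a + sin t * a"
    using sin_le_sin_diff_add_sin[OF L t] a(1) by (simp add: mult_right_mono distrib_right[symmetric])
  also have "\<dots> \<le> sin (L - t) * (w \<bullet> x) + sin t * (w \<bullet> great_circle x u L)"
    using L t a by (intro add_mono mult_left_mono sin_ge_zero) auto
  also have "\<dots> = sin L * (w \<bullet> great_circle x u t)"
    unfolding scalar_prod_great_circle[OF x u w] sin_diff by (simp add: algebra_simps)
  finally show ?thesis using sL by simp
qed

lemma DERIV_local_min_deriv2_nonneg:
  fixes g g' g'' :: "real \<Rightarrow> real"
  assumes g: "\<And>t. (g has_real_derivative g' t) (at t)"
    and g': "\<And>t. (g' has_real_derivative g'' t) (at t)"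
    and d: "d > 0" and min: "\<forall>t. \<bar>t - t0\<bar> < d \<longrightarrow> g t0 \<le> g t"
  shows "g' t0 = 0" "0 \<le> g'' t0"
proof -
  show "g' t0 = 0" using min by (intro DERIV_local_min[OF g d]) (simp add: abs_minus_commute)
  show "0 \<le> g'' t0"
  proof (rule ccontr)
    assume "\<not> 0 \<le> g'' t0"
    from DERIV_neg_dec_right[OF g'] this obtain e where e: "e > 0"
      and dec: "\<And>h. 0 < h \<Longrightarrow> h < e \<Longrightarrow> g' (t0 + h) < g' t0" by force
    define h where "h = min d e / 2"
    have h: "0 < h" "h < d" "h < e" using d e unfolding h_def by auto
    from MVT2[of t0 "t0 + h" g g'] g h obtain s where s: "t0 < s" "s < t0 + h"
      and mvt: "g (t0 + h) - g t0 = h * g' s" by auto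
    have "g' s < 0" using dec[of "s - t0"] s h \<open>g' t0 = 0\<close> by auto
    from mult_pos_neg[OF h(1) this] mvt have "g (t0 + h) < g t0" by simp
    moreover have "g t0 \<le> g (t0 + h)" using min[rule_format, of "t0 + h"] h by simp
    ultimately show False by simp
  qed
qed

lemma nonneg_quadratic_linear_coeff_zero:
  fixes b d :: real
  assumes "\<And>t. 0 \<le> 2 * t * b + t^2 * d"
  shows "b = 0"
proof (rule ccontr)
  assume b: "b \<noteq> 0"
  define K where "K = \<bar>d\<bar> + 1"
  have K: "K > 0" "d - 2 * K < 0" unfolding K_def by auto
  have "0 \<le> 2 * (- b / K) * b + (- b / K)^2 * d" by (rule assms)
  also have "\<dots> = b^2 * (d - 2 * K) / K^2"
    using K by (simp add: field_simps power2_eq_square)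
  also have "\<dots> < 0" using b K by (intro divide_neg_pos mult_pos_neg) auto
  finally show False by simp
qed

lemma circle_coordinate_derivatives:
  fixes a b c :: real
  shows "((\<lambda>t. (cos t * a + sin t * b)^4) has_real_derivative
      4 * (cos t * a + sin t * b)^3 * (- sin t * a + cos t * b)) (at t)"
    and "((\<lambda>t. (cos t * a + sin t * b)^3 * (- sin t * a + cos t * b)) has_real_derivative
      3 * (cos t * a + sin t * b)^2 * (- sin t * a + cos t * b)^2 - (cos t * a + sin t * b)^4) (at t)"
    and "((\<lambda>t. 1/2 * ((cos t)^2 * a + 2 * cos t * sin t * b + (sin t)^2 * c)) has_real_derivative
      - sin t * cos t * a + ((cos t)^2 - (sin t)^2) * b + sin t * cos t * c) (at t)"
    and "((\<lambda>t. - sin t * cos t * a + ((cos t)^2 - (sin t)^2) * b + sin t * cos t * c) has_real_derivative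
      ((sin t)^2 * a - 2 * sin t * cos t * b + (cos t)^2 * c)
      - ((cos t)^2 * a + 2 * cos t * sin t * b + (sin t)^2 * c)) (at t)"
  by (auto intro!: derivative_eq_intros
      simp: algebra_simps power2_eq_square power3_eq_cube power4_eq_xxxx)

definition sphere_coordinates :: "nat \<Rightarrow> (nat \<Rightarrow> real) set" where
  "sphere_coordinates n = {x. (\<forall>i\<ge>n. x i = 0) \<and> (\<Sum>i<n. (x i)^2) = 1}"

lemma compact_sphere_coordinates: "compact (sphere_coordinates n)"
proof -
  have "compactin (product_topology (\<lambda>_. euclidean) UNIV) ((UNIV::nat set) \<rightarrow>\<^sub>E {-1..(1::real)})"
    by (subst compactin_PiE) (simp add: compactin_euclidean_iff)
  hence box: "compact ((UNIV::nat set) \<rightarrow>\<^sub>E {-1..(1::real)})"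
    by (simp add: euclidean_product_topology compactin_euclidean_iff)
  have "sphere_coordinates n = (\<Inter>i\<in>{n..}. {x. x i = 0}) \<inter> {x. (\<Sum>i<n. (x i)^2) = 1}"
    unfolding sphere_coordinates_def by auto
  also have "closed \<dots>"
    by (intro closed_Int closed_INT ballI closed_Collect_eq continuous_intros
        continuous_on_product_coordinates)
  finally have closed: "closed (sphere_coordinates n)" .
  have "x i \<in> {-1..1}" if "x \<in> sphere_coordinates n" for x i
  proof (cases "i < n")
    case True
    have "(x i)^2 \<le> (\<Sum>i<n. (x i)^2)" using True by (intro member_le_sum) auto
    hence "\<bar>x i\<bar> \<le> 1" using that unfolding sphere_coordinates_def by (simp add: abs_square_le_1)
    thus ?thesis by (simp add: abs_le_iff)
  qed (use that in \<open>auto simp: sphere_coordinates_def\<close>)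
  hence "sphere_coordinates n \<subseteq> (UNIV::nat set) \<rightarrow>\<^sub>E {-1..1}" by (auto simp: PiE_UNIV_domain)
  thus ?thesis using compact_Int_closed[OF box closed] by (simp add: Int_absorb1)
qed

lemma scalar_prod_vec:
  assumes "(w::real vec) \<in> carrier_vec n"
  shows "w \<bullet> vec n x = (\<Sum>i<n. w $ i * x i)"
proof -
  have "w \<bullet> vec n x = (\<Sum>i<n. w $ i * vec n x $ i)" using assms by (intro scalar_prod_sum) auto
  also have "\<dots> = (\<Sum>i<n. w $ i * x i)" by (intro sum.cong) auto
  finally show ?thesis .
qed

lemma scalar_prod_self_vec: "vec n x \<bullet> vec n x = (\<Sum>i<n. (x i :: real)^2)"
proof -
  have "vec n x \<bullet> vec n x = (\<Sum>i<n. vec n x $ i * vec n x $ i)" by (rule scalar_prod_sum) auto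
  also have "\<dots> = (\<Sum>i<n. (x i)^2)" by (intro sum.cong) (auto simp: power2_eq_square)
  finally show ?thesis .
qed

lemma unit_sphere_eq_image: "unit_sphere n = vec n ` sphere_coordinates n"
proof (intro equalityI subsetI)
  fix z assume z: "z \<in> unit_sphere n"
  hence zc: "z \<in> carrier_vec n" "z \<bullet> z = 1" unfolding unit_sphere_def by auto
  define x where "x i = (if i < n then z $ i else 0)" for i
  have xz: "vec n x = z" using zc unfolding x_def by (intro eq_vecI) auto
  have "x \<in> sphere_coordinates n"
    using zc scalar_prod_self_vec[of n x] unfolding sphere_coordinates_def xz by (simp add: x_def)
  thus "z \<in> vec n ` sphere_coordinates n" using xz by blast
next
  fix z assume "z \<in> vec n ` sphere_coordinates n"
  thus "z \<in> unit_sphere n"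
    unfolding sphere_coordinates_def unit_sphere_def by (auto simp: scalar_prod_self_vec)
qed

lemma unit_sphere_attains_min:
  fixes F :: "real vec \<Rightarrow> real"
  assumes cont: "continuous_on UNIV (\<lambda>x. F (vec n x))"
    and closed: "closed {x. vec n x \<in> V}" and ne: "unit_sphere n \<inter> V \<noteq> {}"
  obtains z where "z \<in> unit_sphere n \<inter> V" "\<And>w. w \<in> unit_sphere n \<inter> V \<Longrightarrow> F z \<le> F w"
proof -
  define K where "K = sphere_coordinates n \<inter> {x. vec n x \<in> V}"
  have K: "unit_sphere n \<inter> V = vec n ` K" unfolding K_def unit_sphere_eq_image by blast
  have "compact K" unfolding K_def by (intro compact_Int_closed compact_sphere_coordinates closed)
  moreover have "K \<noteq> {}" using ne K by blast
  moreover have "continuous_on K (\<lambda>x. F (vec n x))" by (rule continuous_on_subset[OF cont]) simp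
  ultimately obtain x where x: "x \<in> K" "\<forall>y\<in>K. F (vec n x) \<le> F (vec n y)"
    using continuous_attains_inf by blast
  show ?thesis
  proof (rule that)
    show "vec n x \<in> unit_sphere n \<inter> V" using x(1) K by blast
    fix w assume "w \<in> unit_sphere n \<inter> V"
    then obtain y where "y \<in> K" "w = vec n y" using K by blast
    thus "F (vec n x) \<le> F w" using x(2) by blast
  qed
qed

lemma quadratic_form_vec:
  assumes A: "(A::real mat) \<in> carrier_mat n n"
  shows "vec n x \<bullet> (A *\<^sub>v vec n x) = (\<Sum>i<n. x i * (\<Sum>j<n. A $$ (i,j) * x j))"
proof -
  have "vec n x \<bullet> (A *\<^sub>v vec n x) = (\<Sum>i<n. vec n x $ i * (A *\<^sub>v vec n x) $ i)"
    using A by (intro scalar_prod_sum) auto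
  also have "\<dots> = (\<Sum>i<n. x i * (\<Sum>j<n. A $$ (i,j) * x j))"
  proof (rule sum.cong[OF refl])
    fix i assume i: "i \<in> {..<n}"
    have "(A *\<^sub>v vec n x) $ i = row A i \<bullet> vec n x" using A i by auto
    also have "\<dots> = (\<Sum>j<n. A $$ (i,j) * x j)" using A i by (subst scalar_prod_vec) auto
    finally show "vec n x $ i * (A *\<^sub>v vec n x) $ i = x i * (\<Sum>j<n. A $$ (i,j) * x j)"
      using i by simp
  qed
  finally show ?thesis .
qed

lemma continuous_on_quadratic_form_vec:
  "(A::real mat) \<in> carrier_mat n n \<Longrightarrow> continuous_on UNIV (\<lambda>x. vec n x \<bullet> (A *\<^sub>v vec n x))"
  unfolding quadratic_form_vec by (intro continuous_intros continuous_on_product_coordinates)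

lemma continuous_on_obj_vec:
  assumes A: "A \<in> carrier_mat n n"
  shows "continuous_on UNIV (\<lambda>x. obj A \<beta> (vec n x))"
proof -
  have "continuous_on UNIV (\<lambda>x. 1/2 * (vec n x \<bullet> (A *\<^sub>v vec n x)))"
    by (rule continuous_on_mult_left[OF continuous_on_quadratic_form_vec[OF A]])
  moreover have "continuous_on UNIV (\<lambda>x::nat \<Rightarrow> real. \<beta>/2 * (\<Sum>k<n. (x k)^4))"
    by (intro continuous_intros continuous_on_product_coordinates)
  ultimately have "continuous_on UNIV
      (\<lambda>x. 1/2 * (vec n x \<bullet> (A *\<^sub>v vec n x)) + \<beta>/2 * (\<Sum>k<n. (vec n x $ k)^4))"
    by (simp add: continuous_on_add)
  thus ?thesis unfolding obj_def by simp
qed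

lemma closed_orthogonal_vec:
  assumes "(w::real vec) \<in> carrier_vec n"
  shows "closed {x. vec n x \<in> {y \<in> carrier_vec n. w \<bullet> y = 0}}"
proof -
  have "closed {x. (\<Sum>i<n. w $ i * x i) = 0}"
    by (intro closed_Collect_eq continuous_intros continuous_on_product_coordinates)
  thus ?thesis using assms by (simp add: scalar_prod_vec)
qed

lemma obj_uminus:
  assumes "A \<in> carrier_mat n n" "z \<in> carrier_vec n"
  shows "obj A \<beta> (- z) = obj A \<beta> z"
proof -
  have "A *\<^sub>v (- z) = - (A *\<^sub>v z)"
    using assms by (intro eq_vecI) (auto simp: scalar_prod_uminus_right)
  thus ?thesis using assms unfolding obj_def by (simp add: scalar_prod_uminus_left scalar_prod_uminus_right)
qed

lemma uminus_in_unit_sphere: "z \<in> unit_sphere n \<Longrightarrow> - z \<in> unit_sphere n"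
  unfolding unit_sphere_def by (auto simp: scalar_prod_uminus_left scalar_prod_uminus_right)

lemma vdist_uminus: "vdist (- w) (- z) = vdist w z"
  if "w \<in> carrier_vec n" "z \<in> carrier_vec n"
proof -
  have "- w - - z = - (w - z)" using that by (intro eq_vecI) auto
  thus ?thesis using that unfolding vdist_def by (simp add: scalar_prod_uminus_left scalar_prod_uminus_right)
qed

lemma local_minimizer_on_uminus:
  assumes A: "A \<in> carrier_mat n n" and min: "local_minimizer_on (obj A \<beta>) (unit_sphere n) z"
  shows "local_minimizer_on (obj A \<beta>) (unit_sphere n) (- z)"
proof -
  obtain \<epsilon> where z: "z \<in> unit_sphere n" and \<epsilon>: "\<epsilon> > 0"
    and near: "\<And>w. w \<in> unit_sphere n \<Longrightarrow> vdist w z < \<epsilon> \<Longrightarrow> obj A \<beta> z \<le> obj A \<beta> w"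
    using min unfolding local_minimizer_on_def by blast
  have "obj A \<beta> (- z) \<le> obj A \<beta> w" if w: "w \<in> unit_sphere n" "vdist w (- z) < \<epsilon>" for w
  proof -
    have c: "w \<in> carrier_vec n" "z \<in> carrier_vec n" using w z unfolding unit_sphere_def by auto
    have "- z \<in> carrier_vec n" using c by simp
    from vdist_uminus[OF c(1) this] w have "vdist (- w) z < \<epsilon>" by simp
    from near[OF uminus_in_unit_sphere[OF w(1)] this] show ?thesis
      using obj_uminus[OF A] c by simp
  qed
  thus ?thesis using z \<epsilon> uminus_in_unit_sphere unfolding local_minimizer_on_def by blast
qed

lemma global_minimizer_on_uminus:
  assumes A: "A \<in> carrier_mat n n" and min: "global_minimizer_on (obj A \<beta>) (unit_sphere n) z"
  shows "global_minimizer_on (obj A \<beta>) (unit_sphere n) (- z)"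
  using min obj_uminus[OF A] uminus_in_unit_sphere
  unfolding global_minimizer_on_def unit_sphere_def by auto

lemma global_imp_local_minimizer_on: "global_minimizer_on f S z \<Longrightarrow> local_minimizer_on f S z"
  unfolding global_minimizer_on_def local_minimizer_on_def by (auto intro: exI[of _ 1])

section \<open>Simple eigenvalues\<close>

lemma upper_triangular_eigenvector_eq_0:
  fixes B :: "real mat"
  assumes B: "B \<in> carrier_mat n n" "upper_triangular B"
    and diag: "\<And>i. i < n - 1 \<Longrightarrow> B $$ (i, i) \<noteq> \<mu>"
    and w: "w \<in> carrier_vec n" "B *\<^sub>v w = \<mu> \<cdot>\<^sub>v w" "w $ (n - 1) = 0"
  shows "w = 0\<^sub>v n"
proof (rule ccontr)
  assume nz: "w \<noteq> 0\<^sub>v n"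
  define S where "S = {j. j < n \<and> w $ j \<noteq> 0}"
  have "S \<noteq> {}"
  proof
    assume "S = {}"
    hence "w = 0\<^sub>v n" using w(1) unfolding S_def by (intro eq_vecI) auto
    with nz show False ..
  qed
  moreover have "finite S" unfolding S_def by simp
  moreover define i where "i = Max S"
  ultimately have i: "i < n" "w $ i \<noteq> 0" and above: "\<And>j. j \<in> S \<Longrightarrow> j \<le> i"
    using Max_in[of S] unfolding S_def by auto
  have "\<mu> * w $ i = (B *\<^sub>v w) $ i" using w i by simp
  also have "\<dots> = (\<Sum>j<n. B $$ (i, j) * w $ j)"
    using B w(1) i by (simp add: scalar_prod_sum[of _ n])
  also have "\<dots> = B $$ (i, i) * w $ i + (\<Sum>j\<in>{..<n} - {i}. B $$ (i, j) * w $ j)"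
    using i by (subst sum.remove[of _ i]) auto
  also have "(\<Sum>j\<in>{..<n} - {i}. B $$ (i, j) * w $ j) = 0"
  proof (intro sum.neutral ballI)
    fix j assume j: "j \<in> {..<n} - {i}"
    show "B $$ (i, j) * w $ j = 0"
    proof (cases "j < i")
      case True
      thus ?thesis using B i unfolding upper_triangular_def by auto
    next
      case False
      hence "j \<notin> S" using above[of j] j by auto
      thus ?thesis using j unfolding S_def by auto
    qed
  qed
  finally have "B $$ (i, i) = \<mu>" using i by simp
  moreover have "i < n - 1" using i w(3) by (cases "i = n - 1") auto
  ultimately show False using diag by blast
qed

text \<open>\<open>W\<close> comes from a Schur decomposition \<open>A = P B W\<close>: it maps eigenvectors of \<open>\<mu>\<close> to
  eigenvectors of the upper triangular \<open>B\<close>, in whose diagonal \<open>\<mu>\<close> occurs only last.\<close>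
lemma simple_eigenvalue_last_coordinate:
  fixes A :: "real mat"
  assumes A: "A \<in> carrier_mat n n" and cp: "char_poly A = (\<Prod>e\<leftarrow>es. [:- e, 1:])"
    and simple: "\<And>i. i < n - 1 \<Longrightarrow> es ! i \<noteq> \<mu>"
  obtains W where "W \<in> carrier_mat n n"
    "\<And>x. x \<in> carrier_vec n \<Longrightarrow> A *\<^sub>v x = \<mu> \<cdot>\<^sub>v x \<Longrightarrow> (W *\<^sub>v x) $ (n - 1) = 0 \<Longrightarrow> x = 0\<^sub>v n"
proof -
  obtain B P W where "schur_decomposition A es = (B, P, W)" by (cases "schur_decomposition A es") auto
  from schur_decomposition[OF A cp this] have sim: "similar_mat_wit A B P W"
    and ut: "upper_triangular B" and dg: "diag_mat B = es" by auto
  note sw = similar_mat_witD2[OF A sim]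
  have B: "B \<in> carrier_mat n n" and P: "P \<in> carrier_mat n n" and W: "W \<in> carrier_mat n n"
    using sw by auto
  have diag: "B $$ (i, i) \<noteq> \<mu>" if "i < n - 1" for i
    using simple[OF that] dg that B unfolding diag_mat_def by auto
  show ?thesis
  proof (rule that[OF W])
    fix x assume x: "x \<in> carrier_vec n" "A *\<^sub>v x = \<mu> \<cdot>\<^sub>v x" and last: "(W *\<^sub>v x) $ (n - 1) = 0"
    have Ax: "A *\<^sub>v x = P *\<^sub>v (B *\<^sub>v (W *\<^sub>v x))"
      using sw assoc_mult_mat_vec[OF P mult_carrier_mat[OF B W] x(1)] assoc_mult_mat_vec[OF B W x(1)]
      by simp
    have "B *\<^sub>v (W *\<^sub>v x) = (W * P) *\<^sub>v (B *\<^sub>v (W *\<^sub>v x))" using sw B W x by simp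
    also have "\<dots> = W *\<^sub>v (A *\<^sub>v x)" unfolding Ax using P W B x by simp
    also have "\<dots> = \<mu> \<cdot>\<^sub>v (W *\<^sub>v x)" using x W by (simp add: mult_mat_vec)
    finally have "W *\<^sub>v x = 0\<^sub>v n"
      using W x last by (intro upper_triangular_eigenvector_eq_0[OF B ut diag]) auto
    hence "(P * W) *\<^sub>v x = 0\<^sub>v n"
      using P W x(1) assoc_mult_mat_vec[OF P W x(1)] by (intro eq_vecI) auto
    thus "x = 0\<^sub>v n" using sw x by simp
  qed
qed

lemma simple_eigenvalue_orthogonal_eigenvectors:
  fixes A :: "real mat"
  assumes A: "A \<in> carrier_mat n n" and cp: "char_poly A = (\<Prod>e\<leftarrow>es. [:- e, 1:])"
    and simple: "\<And>i. i < n - 1 \<Longrightarrow> es ! i \<noteq> \<mu>"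
    and x: "x \<in> carrier_vec n" "A *\<^sub>v x = \<mu> \<cdot>\<^sub>v x"
    and y: "y \<in> carrier_vec n" "A *\<^sub>v y = \<mu> \<cdot>\<^sub>v y" "y \<bullet> y = 1"
    and xy: "x \<bullet> y = 0"
  shows "x = 0\<^sub>v n"
proof -
  obtain W where W: "W \<in> carrier_mat n n" and kernel: "\<And>x. x \<in> carrier_vec n \<Longrightarrow>
      A *\<^sub>v x = \<mu> \<cdot>\<^sub>v x \<Longrightarrow> (W *\<^sub>v x) $ (n - 1) = 0 \<Longrightarrow> x = 0\<^sub>v n"
    using simple_eigenvalue_last_coordinate[OF A cp simple] by blast
  define a where "a = (W *\<^sub>v x) $ (n - 1)"
  define b where "b = (W *\<^sub>v y) $ (n - 1)"
  define z where "z = b \<cdot>\<^sub>v x + (- a) \<cdot>\<^sub>v y"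
  have z: "z \<in> carrier_vec n" unfolding z_def using x y by simp
  have n: "0 < n"
  proof (rule ccontr)
    assume "\<not> 0 < n"
    hence "y = 0\<^sub>v n" using y(1) by (intro eq_vecI) auto
    thus False using y(3) by simp
  qed
  have "A *\<^sub>v z = \<mu> \<cdot>\<^sub>v z"
    unfolding z_def using A x y by (intro eq_vecI) (auto simp: mult_add_distrib_mat_vec mult_mat_vec algebra_simps)
  moreover have "(W *\<^sub>v z) $ (n - 1) = 0"
    unfolding z_def a_def b_def using W x y n by (simp add: mult_add_distrib_mat_vec mult_mat_vec)
  ultimately have "z = 0\<^sub>v n" by (rule kernel[OF z])
  hence "z \<bullet> y = 0" using y by simp
  moreover have "z \<bullet> y = - a" unfolding z_def using x y xy by (simp add: add_scalar_prod_distrib[of _ n])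
  ultimately have "a = 0" by simp
  thus ?thesis using kernel[OF x] unfolding a_def by simp
qed

locale sym_mat =
  fixes n :: nat and A :: "real mat"
  assumes A_carrier: "A \<in> carrier_mat n n" and A_sym: "A\<^sup>T = A"
begin

definition Q :: "real vec \<Rightarrow> real vec \<Rightarrow> real" where "Q x y = x \<bullet> (A *\<^sub>v y)"

lemma obj_eq: "z \<in> carrier_vec n \<Longrightarrow> obj A \<beta> z = 1/2 * Q z z + \<beta>/2 * (\<Sum>k<n. (z $ k)^4)"
  unfolding obj_def Q_def by simp

lemma Q_sym: "x \<in> carrier_vec n \<Longrightarrow> y \<in> carrier_vec n \<Longrightarrow> Q x y = Q y x"
  unfolding Q_def using transpose_vec_mult_scalar[OF A_carrier, of x y] A_carrier
  by (simp add: A_sym comm_scalar_prod[of "A *\<^sub>v y" n])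

lemma Q_lincomb2:
  assumes x: "x \<in> carrier_vec n" and y: "y \<in> carrier_vec n"
  shows "Q (a \<cdot>\<^sub>v x + b \<cdot>\<^sub>v y) (c \<cdot>\<^sub>v x + d \<cdot>\<^sub>v y) =
     a * c * Q x x + (a * d + b * c) * Q x y + b * d * Q y y"
  unfolding Q_def using x y A_carrier Q_sym[OF y x, unfolded Q_def]
  by (simp add: mult_add_distrib_mat_vec[OF A_carrier] mult_mat_vec[OF A_carrier]
      scalar_prod_add_distrib[of _ n] add_scalar_prod_distrib[of _ n] algebra_simps)

lemma Q_smult: "x \<in> carrier_vec n \<Longrightarrow> Q (c \<cdot>\<^sub>v x) (c \<cdot>\<^sub>v x) = c^2 * Q x x"
  unfolding Q_def using A_carrier by (simp add: mult_mat_vec power2_eq_square)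

lemma Q_eigenvector:
  assumes "v \<in> carrier_vec n" "A *\<^sub>v v = \<mu> \<cdot>\<^sub>v v" "y \<in> carrier_vec n"
  shows "Q y v = \<mu> * (y \<bullet> v)" "Q v y = \<mu> * (v \<bullet> y)"
proof -
  show yv: "Q y v = \<mu> * (y \<bullet> v)" unfolding Q_def using assms by simp
  show "Q v y = \<mu> * (v \<bullet> y)" using yv Q_sym[OF assms(1,3)] comm_scalar_prod[OF assms(1,3)] by simp
qed

lemma Q_lower_bound_of_sphere:
  assumes V: "\<And>c y. y \<in> V \<Longrightarrow> c \<cdot>\<^sub>v y \<in> V"
    and bound: "\<And>w. w \<in> unit_sphere n \<inter> V \<Longrightarrow> \<mu> \<le> Q w w"
    and y: "y \<in> carrier_vec n" "y \<in> V"
  shows "\<mu> * (y \<bullet> y) \<le> Q y y"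
proof (cases "y = 0\<^sub>v n")
  case True
  thus ?thesis unfolding Q_def using A_carrier by simp
next
  case False
  define c where "c = 1 / sqrt (y \<bullet> y)"
  have pos: "y \<bullet> y > 0" by (rule scalar_prod_self_pos[OF y(1) False])
  have "\<mu> \<le> Q (c \<cdot>\<^sub>v y) (c \<cdot>\<^sub>v y)"
    using bound normalize_in_unit_sphere[OF y(1) False] V[OF y(2)] unfolding c_def by blast
  also have "\<dots> = Q y y / (y \<bullet> y)" unfolding Q_smult[OF y(1)] c_def using pos by (simp add: power_divide)
  finally show ?thesis using pos by (simp add: field_simps)
qed

lemma sphere_min_eigenvector:
  assumes V: "V \<subseteq> carrier_vec n" "\<And>x y. x \<in> V \<Longrightarrow> y \<in> V \<Longrightarrow> x + y \<in> V"
      "\<And>c y. y \<in> V \<Longrightarrow> c \<cdot>\<^sub>v y \<in> V" "\<And>y. y \<in> V \<Longrightarrow> A *\<^sub>v y \<in> V"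
    and z: "z \<in> unit_sphere n \<inter> V" and min: "\<And>w. w \<in> unit_sphere n \<inter> V \<Longrightarrow> Q z z \<le> Q w w"
  shows "A *\<^sub>v z = Q z z \<cdot>\<^sub>v z"
proof -
  have zc: "z \<in> carrier_vec n" "z \<bullet> z = 1" "z \<in> V" using z unfolding unit_sphere_def by auto
  have stat: "Q z u = 0" if u: "u \<in> V" "z \<bullet> u = 0" for u
  proof (rule nonneg_quadratic_linear_coeff_zero)
    fix t
    have uc: "u \<in> carrier_vec n" using u V(1) by auto
    have "1 \<cdot>\<^sub>v z + t \<cdot>\<^sub>v u \<in> V" using V(2,3) zc(3) u(1) by blast
    hence "Q z z * ((1 \<cdot>\<^sub>v z + t \<cdot>\<^sub>v u) \<bullet> (1 \<cdot>\<^sub>v z + t \<cdot>\<^sub>v u)) \<le> Q (1 \<cdot>\<^sub>v z + t \<cdot>\<^sub>v u) (1 \<cdot>\<^sub>v z + t \<cdot>\<^sub>v u)"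
      using zc uc by (intro Q_lower_bound_of_sphere[OF V(3) min]) auto
    thus "0 \<le> 2 * t * Q z u + t^2 * (Q u u - Q z z * (u \<bullet> u))"
      unfolding Q_lincomb2[OF zc(1) uc] scalar_prod_lincomb2[OF zc(1) uc] zc(2) u(2)
      by (simp add: algebra_simps power2_eq_square)
  qed
  define r where "r = A *\<^sub>v z + (- Q z z) \<cdot>\<^sub>v z"
  have Az: "A *\<^sub>v z \<in> carrier_vec n" using A_carrier zc by simp
  have r: "r \<in> carrier_vec n" "r \<in> V" unfolding r_def using zc Az V(2-4) by auto
  have zr: "z \<bullet> r = 0"
    unfolding r_def using zc Az by (simp add: scalar_prod_add_distrib[of _ n] Q_def)
  have "r \<bullet> r = r \<bullet> (A *\<^sub>v z) + (- Q z z) * (r \<bullet> z)"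
    using r(1) Az zc(1) by (subst (2) r_def) (simp add: scalar_prod_add_distrib[of _ n])
  also have "\<dots> = 0"
    using stat[OF r(2) zr] Q_sym[OF zc(1) r(1)] comm_scalar_prod[OF zc(1) r(1)] zr by (simp add: Q_def)
  finally have r0: "r = 0\<^sub>v n" using scalar_prod_self_eq_0[OF r(1)] by simp
  have "(A *\<^sub>v z) $ i = (Q z z \<cdot>\<^sub>v z) $ i" if "i < n" for i
    using arg_cong[OF r0, of "\<lambda>w. w $ i"] that Az zc unfolding r_def by simp
  thus ?thesis using Az zc A_carrier by (intro eq_vecI) auto
qed

definition obj_deriv :: "real \<Rightarrow> real vec \<Rightarrow> real vec \<Rightarrow> real \<Rightarrow> real" where
  "obj_deriv \<beta> x u t = Q (great_circle_tangent x u t) (great_circle x u t)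
     + 2 * \<beta> * (\<Sum>k<n. (great_circle x u t $ k)^3 * great_circle_tangent x u t $ k)"

definition obj_deriv2 :: "real \<Rightarrow> real vec \<Rightarrow> real vec \<Rightarrow> real \<Rightarrow> real" where
  "obj_deriv2 \<beta> x u t =
     Q (great_circle_tangent x u t) (great_circle_tangent x u t) - Q (great_circle x u t) (great_circle x u t)
     + 2 * \<beta> * (\<Sum>k<n. 3 * (great_circle x u t $ k)^2 * (great_circle_tangent x u t $ k)^2
                         - (great_circle x u t $ k)^4)"

context
  fixes x u :: "real vec"
  assumes x: "x \<in> carrier_vec n" and u: "u \<in> carrier_vec n"
begin

lemma Q_great_circle:
  "Q (great_circle x u t) (great_circle x u t) =
     (cos t)^2 * Q x x + 2 * cos t * sin t * Q x u + (sin t)^2 * Q u u"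
  "Q (great_circle_tangent x u t) (great_circle x u t) =
     - sin t * cos t * Q x x + ((cos t)^2 - (sin t)^2) * Q x u + sin t * cos t * Q u u"
  "Q (great_circle_tangent x u t) (great_circle_tangent x u t) =
     (sin t)^2 * Q x x - 2 * sin t * cos t * Q x u + (cos t)^2 * Q u u"
  unfolding great_circle_def great_circle_tangent_def Q_lincomb2[OF x u]
  by (simp_all add: power2_eq_square algebra_simps)

lemma sum_great_circle_coordinates:
  "(\<Sum>k<n. f (great_circle x u t $ k) (great_circle_tangent x u t $ k)) =
     (\<Sum>k<n. f (cos t * x $ k + sin t * u $ k) (- sin t * x $ k + cos t * u $ k))"
  using x u by (auto simp: great_circle_index great_circle_tangent_index intro!: sum.cong)

lemma has_real_derivative_obj_great_circle:
  "((\<lambda>t. obj A \<beta> (great_circle x u t)) has_real_derivative obj_deriv \<beta> x u t) (at t)"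
proof -
  have "obj A \<beta> (great_circle x u t) =
      1/2 * ((cos t)^2 * Q x x + 2 * cos t * sin t * Q x u + (sin t)^2 * Q u u)
      + \<beta>/2 * (\<Sum>k<n. (cos t * x $ k + sin t * u $ k)^4)" for t
    unfolding obj_eq[OF great_circle_carrier[OF x u]] Q_great_circle
      sum_great_circle_coordinates[of "\<lambda>a b. a^4"] ..
  moreover have "obj_deriv \<beta> x u t =
      (- sin t * cos t * Q x x + ((cos t)^2 - (sin t)^2) * Q x u + sin t * cos t * Q u u)
      + \<beta>/2 * (\<Sum>k<n. 4 * (cos t * x $ k + sin t * u $ k)^3 * (- sin t * x $ k + cos t * u $ k))"
    unfolding obj_deriv_def Q_great_circle sum_great_circle_coordinates[of "\<lambda>a b. a^3 * b"]
    by (simp add: sum_distrib_left algebra_simps)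
  ultimately show ?thesis
    by (simp only:) (intro DERIV_add DERIV_cmult DERIV_sum circle_coordinate_derivatives(1,3))
qed

lemma has_real_derivative_obj_deriv:
  "((\<lambda>t. obj_deriv \<beta> x u t) has_real_derivative obj_deriv2 \<beta> x u t) (at t)"
proof -
  have "obj_deriv \<beta> x u t =
      (- sin t * cos t * Q x x + ((cos t)^2 - (sin t)^2) * Q x u + sin t * cos t * Q u u)
      + 2 * \<beta> * (\<Sum>k<n. (cos t * x $ k + sin t * u $ k)^3 * (- sin t * x $ k + cos t * u $ k))" for t
    unfolding obj_deriv_def Q_great_circle sum_great_circle_coordinates[of "\<lambda>a b. a^3 * b"] ..
  moreover have "obj_deriv2 \<beta> x u t =
      (((sin t)^2 * Q x x - 2 * sin t * cos t * Q x u + (cos t)^2 * Q u u)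
       - ((cos t)^2 * Q x x + 2 * cos t * sin t * Q x u + (sin t)^2 * Q u u))
      + 2 * \<beta> * (\<Sum>k<n. 3 * (cos t * x $ k + sin t * u $ k)^2 * (- sin t * x $ k + cos t * u $ k)^2
                          - (cos t * x $ k + sin t * u $ k)^4)"
    unfolding obj_deriv2_def Q_great_circle
      sum_great_circle_coordinates[of "\<lambda>a b. 3 * a^2 * b^2 - a^4"] ..
  ultimately show ?thesis
    by (simp only:) (intro DERIV_add DERIV_cmult DERIV_sum circle_coordinate_derivatives(2,4))
qed

end

lemma local_minimizer_great_circle:
  assumes min: "local_minimizer_on (obj A \<beta>) (unit_sphere n) (great_circle x u s)"
    and xu: "orthonormal_pair n x u"
  shows "obj_deriv \<beta> x u s = 0" "0 \<le> obj_deriv2 \<beta> x u s"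
proof -
  note xu' = orthonormal_pairD[OF xu]
  obtain \<epsilon> where \<epsilon>: "\<epsilon> > 0" and near: "\<And>w. w \<in> unit_sphere n \<Longrightarrow>
      vdist w (great_circle x u s) < \<epsilon> \<Longrightarrow> obj A \<beta> (great_circle x u s) \<le> obj A \<beta> w"
    using min unfolding local_minimizer_on_def by blast
  have "\<forall>t. \<bar>t - s\<bar> < \<epsilon> \<longrightarrow> obj A \<beta> (great_circle x u s) \<le> obj A \<beta> (great_circle x u t)"
  proof (intro allI impI)
    fix t assume "\<bar>t - s\<bar> < \<epsilon>"
    hence "vdist (great_circle x u t) (great_circle x u s) < \<epsilon>"
      using vdist_great_circle_le[OF xu, of t s] by simp
    thus "obj A \<beta> (great_circle x u s) \<le> obj A \<beta> (great_circle x u t)"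
      using near[OF great_circle_in_sphere[OF xu]] by blast
  qed
  from DERIV_local_min_deriv2_nonneg[OF has_real_derivative_obj_great_circle[OF xu'(1,2)]
      has_real_derivative_obj_deriv[OF xu'(1,2)] \<epsilon> this]
  show "obj_deriv \<beta> x u s = 0" "0 \<le> obj_deriv2 \<beta> x u s" .
qed

lemma eigenvectors_orthogonal:
  assumes x: "x \<in> carrier_vec n" "A *\<^sub>v x = a \<cdot>\<^sub>v x" and y: "y \<in> carrier_vec n" "A *\<^sub>v y = b \<cdot>\<^sub>v y"
    and ab: "a \<noteq> b"
  shows "x \<bullet> y = 0"
proof -
  have "a * (x \<bullet> y) = b * (x \<bullet> y)"
    using Q_eigenvector(1)[OF y(1,2) x(1)] Q_eigenvector(2)[OF x y(1)] by simp
  thus ?thesis using ab by simp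
qed

lemma orthogonal_complement_min_eigenvector:
  assumes v: "v \<in> carrier_vec n" "A *\<^sub>v v = \<mu> \<cdot>\<^sub>v v" and w: "w \<in> unit_sphere n" "v \<bullet> w = 0"
  obtains z where "z \<in> unit_sphere n" "v \<bullet> z = 0" "A *\<^sub>v z = Q z z \<cdot>\<^sub>v z"
    "\<And>y. y \<in> carrier_vec n \<Longrightarrow> v \<bullet> y = 0 \<Longrightarrow> Q z z * (y \<bullet> y) \<le> Q y y"
proof -
  define V where "V = {y \<in> carrier_vec n. v \<bullet> y = 0}"
  have V_add: "x + y \<in> V" if "x \<in> V" "y \<in> V" for x y
    using that v unfolding V_def by (simp add: scalar_prod_add_distrib[of _ n])
  have V_smult: "c \<cdot>\<^sub>v y \<in> V" if "y \<in> V" for c y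
    using that v unfolding V_def by simp
  have V_A: "A *\<^sub>v y \<in> V" if "y \<in> V" for y
    using that v Q_eigenvector(2)[OF v] A_carrier unfolding V_def Q_def by simp
  have ne: "unit_sphere n \<inter> V \<noteq> {}" using w unfolding unit_sphere_def V_def by blast
  have cont: "continuous_on UNIV (\<lambda>x. Q (vec n x) (vec n x))"
    unfolding Q_def by (rule continuous_on_quadratic_form_vec[OF A_carrier])
  have closed: "closed {x. vec n x \<in> V}" unfolding V_def by (rule closed_orthogonal_vec[OF v(1)])
  obtain z where z: "z \<in> unit_sphere n \<inter> V"
    and min: "\<And>w. w \<in> unit_sphere n \<inter> V \<Longrightarrow> Q z z \<le> Q w w"
    using unit_sphere_attains_min[where F = "\<lambda>z. Q z z", OF cont closed ne] by blast
  show ?thesis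
  proof (rule that)
    show "z \<in> unit_sphere n" "v \<bullet> z = 0" using z unfolding V_def by auto
    show "A *\<^sub>v z = Q z z \<cdot>\<^sub>v z"
      using z min V_add V_smult V_A by (intro sphere_min_eigenvector[of V]) (auto simp: V_def)
    show "Q z z * (y \<bullet> y) \<le> Q y y" if "y \<in> carrier_vec n" "v \<bullet> y = 0" for y
      using that min V_smult by (intro Q_lower_bound_of_sphere[of V]) (auto simp: V_def)
  qed
qed
end

section \<open>Rayleigh bounds from the spectrum\<close>

locale sym_mat_spectrum = sym_mat +
  fixes lam :: "nat \<Rightarrow> real"
  assumes char_poly_eq: "char_poly A = (\<Prod>i=1..n. [:- lam i, 1:])"
    and lam_antimono: "\<And>i j. 1 \<le> i \<Longrightarrow> i \<le> j \<Longrightarrow> j \<le> n \<Longrightarrow> lam j \<le> lam i"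
begin

lemma eigenvalue_in_spectrum:
  assumes "z \<in> carrier_vec n" "z \<noteq> 0\<^sub>v n" "A *\<^sub>v z = e \<cdot>\<^sub>v z"
  obtains i where "i \<in> {1..n}" "e = lam i"
proof -
  have "eigenvalue A e" unfolding eigenvalue_def eigenvector_def using assms A_carrier by auto
  hence "poly (char_poly A) e = 0" using eigenvalue_root_char_poly[OF A_carrier] by simp
  thus ?thesis using that unfolding char_poly_eq by (subst (asm) poly_prod_0) auto
qed

lemma unit_eigenvector_exists:
  assumes "i \<in> {1..n}"
  obtains z where "z \<in> unit_sphere n" "A *\<^sub>v z = lam i \<cdot>\<^sub>v z"
proof -
  have "poly (char_poly A) (lam i) = 0" unfolding char_poly_eq using assms by (subst poly_prod_0) auto
  hence "eigenvalue A (lam i)" using eigenvalue_root_char_poly[OF A_carrier] by simp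
  then obtain y where y: "y \<in> carrier_vec n" "y \<noteq> 0\<^sub>v n" "A *\<^sub>v y = lam i \<cdot>\<^sub>v y"
    unfolding eigenvalue_def eigenvector_def using A_carrier by auto
  show ?thesis
  proof (rule that[OF normalize_in_unit_sphere[OF y(1,2)]])
    show "A *\<^sub>v ((1 / sqrt (y \<bullet> y)) \<cdot>\<^sub>v y) = lam i \<cdot>\<^sub>v ((1 / sqrt (y \<bullet> y)) \<cdot>\<^sub>v y)"
      using y A_carrier by (simp add: mult_mat_vec smult_smult_assoc mult.commute)
  qed
qed

lemma Q_le_top_eigenvalue:
  assumes n: "0 < n" and y: "y \<in> carrier_vec n"
  shows "Q y y \<le> lam 1 * (y \<bullet> y)"
proof -
  interpret neg: sym_mat n "- A"
    by unfold_locales (use A_carrier A_sym in \<open>auto simp: transpose_uminus\<close>)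
  have neg_Q: "neg.Q x x = - Q x x" if "x \<in> carrier_vec n" for x
    unfolding neg.Q_def Q_def using that A_carrier by (simp add: scalar_prod_uminus_right)
  have cont: "continuous_on UNIV (\<lambda>x. neg.Q (vec n x) (vec n x))"
    unfolding neg.Q_def using A_carrier by (intro continuous_on_quadratic_form_vec) simp
  have ne: "unit_sphere n \<inter> carrier_vec n \<noteq> {}"
    using unit_vec_in_unit_sphere[OF n] unfolding unit_sphere_def by blast
  obtain z where z: "z \<in> unit_sphere n \<inter> carrier_vec n"
    and max: "\<And>w. w \<in> unit_sphere n \<inter> carrier_vec n \<Longrightarrow> neg.Q z z \<le> neg.Q w w"
    using unit_sphere_attains_min[where F = "\<lambda>z. neg.Q z z", OF cont _ ne] by auto
  have zc: "z \<in> carrier_vec n" "z \<noteq> 0\<^sub>v n" using z unfolding unit_sphere_def by auto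
  have ev: "- A *\<^sub>v z = neg.Q z z \<cdot>\<^sub>v z"
    using z max by (intro neg.sphere_min_eigenvector) (use A_carrier in auto)
  have "(A *\<^sub>v z) $ i = (Q z z \<cdot>\<^sub>v z) $ i" if "i < n" for i
    using arg_cong[OF ev, of "\<lambda>w. w $ i"] that A_carrier zc neg_Q[OF zc(1)] by simp
  hence "A *\<^sub>v z = Q z z \<cdot>\<^sub>v z" using A_carrier zc by (intro eq_vecI) auto
  then obtain j where "j \<in> {1..n}" "Q z z = lam j" using eigenvalue_in_spectrum[OF zc] by metis
  hence top: "Q z z \<le> lam 1" using lam_antimono[of 1 j] by auto
  have "neg.Q z z * (y \<bullet> y) \<le> neg.Q y y"
    using max y by (intro neg.Q_lower_bound_of_sphere[where V = "carrier_vec n"]) auto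
  hence "Q y y \<le> Q z z * (y \<bullet> y)" unfolding neg_Q[OF zc(1)] neg_Q[OF y] by simp
  also have "\<dots> \<le> lam 1 * (y \<bullet> y)" using top scalar_prod_self_nonneg[of y] by (rule mult_right_mono)
  finally show ?thesis .
qed

lemma char_poly_eq_prod_list: "char_poly A = (\<Prod>e\<leftarrow>map lam [1..<Suc n]. [:- e, 1:])"
proof -
  have "(\<Prod>e\<leftarrow>map lam [1..<Suc n]. [:- e, 1:]) = (\<Prod>i\<in>set [1..<Suc n]. [:- lam i, 1:])"
    by (simp only: prod.distinct_set_conv_list[OF distinct_upt] map_map o_def)
  also have "set [1..<Suc n] = {1..n}" by auto
  finally show ?thesis unfolding char_poly_eq by simp
qed

lemma Q_ge_second_eigenvalue:
  assumes n: "2 \<le> n" and gap: "lam n < lam (n - 1)"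
    and v: "v \<in> unit_sphere n" "A *\<^sub>v v = lam n \<cdot>\<^sub>v v"
    and y: "y \<in> carrier_vec n" "v \<bullet> y = 0"
  shows "lam (n - 1) * (y \<bullet> y) \<le> Q y y"
proof -
  have vc: "v \<in> carrier_vec n" "v \<bullet> v = 1" using v unfolding unit_sphere_def by auto
  have "n - 1 \<in> {1..n}" using n by auto
  then obtain w where w: "w \<in> unit_sphere n" "A *\<^sub>v w = lam (n - 1) \<cdot>\<^sub>v w"
    by (rule unit_eigenvector_exists)
  have "v \<bullet> w = 0"
    using w gap vc by (intro eigenvectors_orthogonal[OF vc(1) v(2)]) (auto simp: unit_sphere_def)
  then obtain z where z: "z \<in> unit_sphere n" "v \<bullet> z = 0" "A *\<^sub>v z = Q z z \<cdot>\<^sub>v z"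
    and min: "Q z z * (y \<bullet> y) \<le> Q y y"
    using orthogonal_complement_min_eigenvector[OF vc(1) v(2) w(1)] y by metis
  have zc: "z \<in> carrier_vec n" "z \<noteq> 0\<^sub>v n" using z unfolding unit_sphere_def by auto
  obtain k where k: "k \<in> {1..n}" "Q z z = lam k" using eigenvalue_in_spectrum[OF zc z(3)] by metis
  have "lam k \<noteq> lam n"
  proof
    assume "lam k = lam n"
    have "map lam [1..<Suc n] ! i \<noteq> lam n" if "i < n - 1" for i
      using lam_antimono[of "Suc i" "n - 1"] that gap by (simp del: upt_Suc add: nth_upt)
    from simple_eigenvalue_orthogonal_eigenvectors[OF A_carrier char_poly_eq_prod_list this zc(1) _ vc(1) v(2)]
    show False using z k \<open>lam k = lam n\<close> zc vc comm_scalar_prod[OF zc(1) vc(1)] by auto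
  qed
  hence "lam (n - 1) \<le> Q z z" using k lam_antimono[of k "n - 1"] by (cases "k = n") auto
  with min show ?thesis using scalar_prod_self_nonneg[of y] by (meson mult_right_mono order_trans)
qed
end

section \<open>Local minimizers of the quartic objective\<close>

text \<open>Here \<open>s\<close> and \<open>t\<close> are \<open>sin\<^sup>2\<close> and \<open>cos\<^sup>2\<close> of the angle between a local minimizer and \<open>v\<close>;
  the two hypotheses on them come from the first- and second-order conditions.\<close>
lemma cap_arith:
  fixes \<delta> \<beta> s t :: real
  assumes \<delta>: "\<delta> > 0" and \<beta>: "\<beta> > 0" "16 * \<beta> \<le> 3 * \<delta>"
    and st: "s + t = 1" "s \<ge> 0" "t \<ge> 0"
    and first: "s * t * \<delta>^2 \<le> \<beta>^2" and second: "t \<le> s \<Longrightarrow> (s - t) * \<delta> \<le> 3 * \<beta>"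
  shows "\<delta>^2 * s \<le> 2 * \<beta>^2"
proof (cases "s \<ge> 1/2")
  case True
  have ts: "t \<le> s" and diff: "s - t = 1 - 2 * t" using True st by linarith+
  have "(1 - 2 * t) * \<delta> \<le> 3 * \<beta>" using second[OF ts] unfolding diff .
  hence "\<delta> - 2 * (t * \<delta>) \<le> 3 * \<beta>" by (simp add: algebra_simps)
  hence "7/32 * \<delta> \<le> t * \<delta>" using \<beta> by linarith
  hence "7/32 \<le> t" using \<delta> by simp
  hence "1/2 * (7/32) * \<delta>^2 \<le> s * t * \<delta>^2" using True by (intro mult_right_mono mult_mono) auto
  moreover have "\<beta>^2 \<le> (3 * \<delta> / 16)^2" using \<beta> by (intro power_mono) auto
  moreover have "(3 * \<delta> / 16)^2 = 9/256 * \<delta>^2" by (simp add: power_divide power_mult_distrib)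
  moreover have "\<delta>^2 > 0" using \<delta> by simp
  ultimately show ?thesis using first by linarith
next
  case False
  hence "s * (1/2) * \<delta>^2 \<le> s * t * \<delta>^2" using st by (intro mult_right_mono mult_left_mono) auto
  thus ?thesis using first by argo
qed

locale quartic_sphere = sym_mat +
  fixes \<beta> \<mu> \<delta> \<rho> :: real and v :: "real vec"
  assumes v: "v \<in> unit_sphere n" and v_eigen: "A *\<^sub>v v = \<mu> \<cdot>\<^sub>v v"
    and Q_ge_orthogonal: "\<And>y. y \<in> carrier_vec n \<Longrightarrow> v \<bullet> y = 0 \<Longrightarrow> (\<mu> + \<delta>) * (y \<bullet> y) \<le> Q y y"
    and Q_le: "\<And>y. y \<in> carrier_vec n \<Longrightarrow> Q y y \<le> (\<mu> + \<rho>) * (y \<bullet> y)"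
    and \<delta>_pos: "0 < \<delta>" and \<beta>_pos: "0 < \<beta>" and \<beta>_le: "16 * \<beta> \<le> 3 * \<delta>"
    and \<beta>_cubic: "2 * \<beta>^2 * (\<delta> + \<rho>) + 2 * \<beta> * \<delta>^2 < \<delta>^3"
begin

lemma v_carrier: "v \<in> carrier_vec n" and v_unit: "v \<bullet> v = 1"
  using v unfolding unit_sphere_def by auto

lemma Q_unit_bounds:
  assumes x: "x \<in> unit_sphere n"
  shows "\<mu> + \<delta> * (1 - (v \<bullet> x)^2) \<le> Q x x" "Q x x \<le> \<mu> + \<rho> * (1 - (v \<bullet> x)^2)"
proof -
  have xc: "x \<in> carrier_vec n" "x \<bullet> x = 1" using x unfolding unit_sphere_def by auto
  define c where "c = v \<bullet> x"
  define y where "y = (- c) \<cdot>\<^sub>v v + 1 \<cdot>\<^sub>v x"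
  have y: "y \<in> carrier_vec n" unfolding y_def using v_carrier xc by simp
  have vy: "v \<bullet> y = 0" unfolding y_def c_def using v_carrier xc v_unit
    by (simp add: scalar_prod_add_distrib[of _ n])
  have yy: "y \<bullet> y = 1 - c^2"
    unfolding y_def scalar_prod_lincomb2[OF v_carrier xc(1)] v_unit xc(2) c_def[symmetric]
    by (simp add: power2_eq_square)
  have "Q v x = \<mu> * c" using Q_eigenvector(2)[OF v_carrier v_eigen xc(1)] c_def by simp
  hence Qx: "Q x x = c^2 * \<mu> + Q y y"
    unfolding y_def Q_lincomb2[OF v_carrier xc(1)] Q_eigenvector(1)[OF v_carrier v_eigen v_carrier] v_unit
    by (simp add: power2_eq_square algebra_simps)
  show "\<mu> + \<delta> * (1 - (v \<bullet> x)^2) \<le> Q x x"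
    using Q_ge_orthogonal[OF y vy] unfolding Qx yy c_def[symmetric] by (simp add: algebra_simps)
  show "Q x x \<le> \<mu> + \<rho> * (1 - (v \<bullet> x)^2)"
    using Q_le[OF y] unfolding Qx yy c_def[symmetric] by (simp add: algebra_simps)
qed

lemma scalar_prod_v_uminus: "x \<in> carrier_vec n \<Longrightarrow> v \<bullet> (- x) = - (v \<bullet> x)"
  using v_carrier by simp

lemma \<rho>_nonneg: "0 \<le> \<rho>"
  using Q_le[OF v_carrier] Q_eigenvector(1)[OF v_carrier v_eigen v_carrier] v_unit by simp

lemma Q_great_circle_from_v:
  assumes "orthonormal_pair n v u"
  shows "Q (great_circle_tangent v u t) (great_circle v u t) = sin t * cos t * (Q u u - \<mu>)"
    and "Q (great_circle_tangent v u t) (great_circle_tangent v u t) - Q (great_circle v u t) (great_circle v u t)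
      = ((cos t)^2 - (sin t)^2) * (Q u u - \<mu>)"
proof -
  note vu = orthonormal_pairD[OF assms]
  have "Q v v = \<mu>" "Q v u = 0"
    using Q_eigenvector[OF v_carrier v_eigen] vu by simp_all
  thus "Q (great_circle_tangent v u t) (great_circle v u t) = sin t * cos t * (Q u u - \<mu>)"
    "Q (great_circle_tangent v u t) (great_circle_tangent v u t) - Q (great_circle v u t) (great_circle v u t)
      = ((cos t)^2 - (sin t)^2) * (Q u u - \<mu>)"
    unfolding Q_great_circle[OF vu(1,2)] by (simp_all add: algebra_simps)
qed

lemma local_minimizer_angle_bounds:
  assumes vu: "orthonormal_pair n v u"
    and min: "local_minimizer_on (obj A \<beta>) (unit_sphere n) (great_circle v u L)"
  shows "(sin L)^2 * (cos L)^2 * \<delta>^2 \<le> \<beta>^2"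
    and "(cos L)^2 \<le> (sin L)^2 \<Longrightarrow> ((sin L)^2 - (cos L)^2) * \<delta> \<le> 3 * \<beta>"
proof -
  note vu' = orthonormal_pairD[OF vu]
  define K where "K = Q u u - \<mu>"
  have K: "\<delta> \<le> K" using Q_ge_orthogonal[OF vu'(2) vu'(5)] vu'(4) unfolding K_def by simp
  have first: "obj_deriv \<beta> v u L = 0" and second: "0 \<le> obj_deriv2 \<beta> v u L"
    by (rule local_minimizer_great_circle[OF min vu])+
  note quartic = orthonormal_pair_quartic_bounds[OF great_circle_orthonormal[OF vu, of L]]
  have "\<bar>sin L * cos L * K\<bar> = 2 * \<beta> * \<bar>\<Sum>k<n. (great_circle v u L $ k)^3 * great_circle_tangent v u L $ k\<bar>"
    using first \<beta>_pos unfolding obj_deriv_def Q_great_circle_from_v(1)[OF vu] K_def[symmetric]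
    by (simp add: abs_mult eq_neg_iff_add_eq_0[symmetric])
  also have "\<dots> \<le> \<beta>" using quartic(1) \<beta>_pos by simp
  finally have "\<bar>sin L * cos L\<bar> * K \<le> \<beta>" using K \<delta>_pos by (simp add: abs_mult)
  hence "\<bar>sin L * cos L\<bar> * \<delta> \<le> \<beta>"
    using mult_left_mono[OF K abs_ge_zero[of "sin L * cos L"]] by linarith
  hence "(\<bar>sin L * cos L\<bar> * \<delta>)^2 \<le> \<beta>^2" using \<delta>_pos by (intro power_mono) auto
  thus "(sin L)^2 * (cos L)^2 * \<delta>^2 \<le> \<beta>^2" by (simp add: power_mult_distrib)
  have "2 * \<beta> * (\<Sum>k<n. 3 * (great_circle v u L $ k)^2 * (great_circle_tangent v u L $ k)^2
      - (great_circle v u L $ k)^4) \<le> 3 * \<beta>"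
    using mult_left_mono[OF quartic(3), of "2 * \<beta>"] \<beta>_pos by simp
  moreover have "((sin L)^2 - (cos L)^2) * K = - (((cos L)^2 - (sin L)^2) * K)" by (simp add: algebra_simps)
  ultimately have second': "((sin L)^2 - (cos L)^2) * K \<le> 3 * \<beta>"
    using second unfolding obj_deriv2_def Q_great_circle_from_v(2)[OF vu] K_def[symmetric] by linarith
  show "((sin L)^2 - (cos L)^2) * \<delta> \<le> 3 * \<beta>" if "(cos L)^2 \<le> (sin L)^2"
  proof -
    have "((sin L)^2 - (cos L)^2) * \<delta> \<le> ((sin L)^2 - (cos L)^2) * K"
      using that K by (intro mult_left_mono) auto
    with second' show ?thesis by linarith
  qed
qed

lemma local_minimizer_cap:
  assumes min: "local_minimizer_on (obj A \<beta>) (unit_sphere n) z"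
  shows "\<delta>^2 * (1 - (v \<bullet> z)^2) \<le> 2 * \<beta>^2"
proof (cases "z = v \<or> z = - v")
  case True
  thus ?thesis using v_carrier v_unit by (auto simp: scalar_prod_uminus_right)
next
  case False
  have z: "z \<in> unit_sphere n" using min unfolding local_minimizer_on_def by blast
  obtain u L where vu: "orthonormal_pair n v u" and zL: "great_circle v u L = z"
    using great_circle_through[OF v z] False by metis
  note bounds = local_minimizer_angle_bounds[OF vu min[folded zL]]
  have "v \<bullet> z = cos L"
    unfolding zL[symmetric] scalar_prod_great_circle[OF orthonormal_pairD(1,2)[OF vu] v_carrier]
    using orthonormal_pairD[OF vu] v_unit by simp
  moreover have "\<delta>^2 * (sin L)^2 \<le> 2 * \<beta>^2"
    using bounds \<delta>_pos \<beta>_pos \<beta>_le sin_cos_squared_add[of L]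
    by (intro cap_arith[where t = "(cos L)^2"]) auto
  moreover have "1 - (cos L)^2 = (sin L)^2" by (simp add: sin_squared_eq)
  ultimately show ?thesis by simp
qed

lemma scalar_prod_v_local_minimizer_nonzero:
  assumes "local_minimizer_on (obj A \<beta>) (unit_sphere n) z"
  shows "v \<bullet> z \<noteq> 0"
proof
  assume "v \<bullet> z = 0"
  hence "\<delta>^2 \<le> 2 * \<beta>^2" using local_minimizer_cap[OF assms] by simp
  moreover have "\<beta>^2 \<le> (3 * \<delta> / 16)^2" using \<beta>_pos \<beta>_le by (intro power_mono) auto
  moreover have "(3 * \<delta> / 16)^2 = 9/256 * \<delta>^2" by (simp add: power_divide power_mult_distrib)
  moreover have "\<delta>^2 > 0" using \<delta>_pos by simp
  ultimately show False by linarith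
qed

lemma obj_deriv2_pos_in_cap:
  assumes xu: "orthonormal_pair n x u"
    and cap: "\<delta>^2 * (1 - (v \<bullet> great_circle x u t)^2) \<le> 2 * \<beta>^2"
  shows "0 < obj_deriv2 \<beta> x u t"
proof -
  let ?p = "great_circle x u t" and ?q = "great_circle_tangent x u t"
  have pq: "orthonormal_pair n ?p ?q" by (rule great_circle_orthonormal[OF xu])
  have sphere: "?p \<in> unit_sphere n" "?q \<in> unit_sphere n"
    using orthonormal_pairD[OF pq] unfolding unit_sphere_def by auto
  define e where "e = 1 - (v \<bullet> ?p)^2"
  have "(v \<bullet> ?p)^2 + (v \<bullet> ?q)^2 \<le> 1"
    using orthonormal_pair_bessel[OF pq v_carrier] v_unit comm_scalar_prod[OF v_carrier] sphere
    unfolding unit_sphere_def by simp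
  hence "\<delta> * (v \<bullet> ?p)^2 \<le> \<delta> * (1 - (v \<bullet> ?q)^2)" using \<delta>_pos by simp
  hence "\<mu> + \<delta> - \<delta> * e \<le> Q ?q ?q"
    using Q_unit_bounds(1)[OF sphere(2)] unfolding e_def by (simp add: algebra_simps)
  moreover have "Q ?p ?p \<le> \<mu> + \<rho> * e" using Q_unit_bounds(2)[OF sphere(1)] unfolding e_def .
  moreover have "2 * \<beta> * (-1) \<le> 2 * \<beta> * (\<Sum>k<n. 3 * (?p $ k)^2 * (?q $ k)^2 - (?p $ k)^4)"
    using orthonormal_pair_quartic_bounds(2)[OF pq] \<beta>_pos by (intro mult_left_mono) auto
  ultimately have lower: "\<delta> - \<delta> * e - \<rho> * e - 2 * \<beta> \<le> obj_deriv2 \<beta> x u t"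
    unfolding obj_deriv2_def by linarith
  have "(\<delta> + \<rho>) * (\<delta>^2 * e) \<le> (\<delta> + \<rho>) * (2 * \<beta>^2)"
    using cap \<delta>_pos \<rho>_nonneg unfolding e_def by (intro mult_left_mono) auto
  moreover have "\<delta>^2 * (\<delta> - \<delta> * e - \<rho> * e - 2 * \<beta>) = \<delta>^3 - (\<delta> + \<rho>) * (\<delta>^2 * e) - 2 * \<beta> * \<delta>^2"
    by (simp add: power2_eq_square power3_eq_cube algebra_simps)
  moreover have "(\<delta> + \<rho>) * (2 * \<beta>^2) = 2 * \<beta>^2 * (\<delta> + \<rho>)" by simp
  ultimately have "0 < \<delta>^2 * (\<delta> - \<delta> * e - \<rho> * e - 2 * \<beta>)" using \<beta>_cubic by linarith
  hence "0 < \<delta> - \<delta> * e - \<rho> * e - 2 * \<beta>" by (simp add: zero_less_mult_iff)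
  with lower show ?thesis by linarith
qed

lemma local_minimizers_same_hemisphere:
  assumes min1: "local_minimizer_on (obj A \<beta>) (unit_sphere n) z1"
    and min2: "local_minimizer_on (obj A \<beta>) (unit_sphere n) z2"
    and pos: "0 < v \<bullet> z1" "0 < v \<bullet> z2"
  shows "z1 = z2"
proof (rule ccontr)
  assume ne: "z1 \<noteq> z2"
  have z: "z1 \<in> unit_sphere n" "z2 \<in> unit_sphere n"
    using min1 min2 unfolding local_minimizer_on_def by auto
  have "z2 \<noteq> - z1"
  proof
    assume "z2 = - z1"
    hence "v \<bullet> z2 = - (v \<bullet> z1)" using z scalar_prod_v_uminus unfolding unit_sphere_def by auto
    thus False using pos by simp
  qed
  then obtain u L where xu: "orthonormal_pair n z1 u" and L: "0 < L" "L < pi"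
    and z2: "great_circle z1 u L = z2"
    using great_circle_through[OF z(1) z(2)] ne by metis
  note xu' = orthonormal_pairD[OF xu]
  have "obj_deriv \<beta> z1 u 0 = 0"
    using local_minimizer_great_circle(1)[OF _ xu, where s = 0] min1 great_circle_0[OF xu'(1,2)] by simp
  moreover have "obj_deriv \<beta> z1 u L = 0"
    using local_minimizer_great_circle(1)[OF _ xu, where s = L] min2 z2 by simp
  moreover obtain \<xi> where \<xi>: "0 < \<xi>" "\<xi> < L"
    and "obj_deriv \<beta> z1 u L - obj_deriv \<beta> z1 u 0 = (L - 0) * obj_deriv2 \<beta> z1 u \<xi>"
    using MVT2[OF L(1) has_real_derivative_obj_deriv[OF xu'(1,2)]] by blast
  ultimately have D2: "obj_deriv2 \<beta> z1 u \<xi> = 0" using L by simp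
  define a where "a = min (v \<bullet> z1) (v \<bullet> z2)"
  have a: "0 < a" "a \<le> v \<bullet> z1" "a \<le> v \<bullet> great_circle z1 u L" unfolding a_def z2 using pos by auto
  have cap: "\<delta>^2 * (1 - a^2) \<le> 2 * \<beta>^2"
    unfolding a_def min_def using local_minimizer_cap[OF min1] local_minimizer_cap[OF min2] by simp
  have "a \<le> v \<bullet> great_circle z1 u \<xi>"
    using great_circle_scalar_prod_ge[OF xu'(1,2) v_carrier L] \<xi> a by simp
  hence "a^2 \<le> (v \<bullet> great_circle z1 u \<xi>)^2" using a by (intro power_mono) auto
  hence "\<delta>^2 * (1 - (v \<bullet> great_circle z1 u \<xi>)^2) \<le> \<delta>^2 * (1 - a^2)" by (intro mult_left_mono) auto
  from obj_deriv2_pos_in_cap[OF xu order_trans[OF this cap]] D2 show False by simp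
qed

lemma local_minimizer_eq_or_neg:
  assumes z: "local_minimizer_on (obj A \<beta>) (unit_sphere n) z"
    and w: "local_minimizer_on (obj A \<beta>) (unit_sphere n) w"
  shows "z = w \<or> z = - w"
proof -
  have flip: "\<exists>z'\<in>{z, - z}. local_minimizer_on (obj A \<beta>) (unit_sphere n) z' \<and> 0 < v \<bullet> z'"
    if "local_minimizer_on (obj A \<beta>) (unit_sphere n) z" for z
  proof -
    have "z \<in> carrier_vec n" using that unfolding local_minimizer_on_def unit_sphere_def by auto
    thus ?thesis using scalar_prod_v_local_minimizer_nonzero[OF that] that
        local_minimizer_on_uminus[OF A_carrier that] v_carrier
      by (cases "0 < v \<bullet> z") (auto simp: scalar_prod_v_uminus)
  qed
  obtain z' w' where "z' \<in> {z, - z}" "w' \<in> {w, - w}" "z' = w'"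
    using flip[OF z] flip[OF w] local_minimizers_same_hemisphere by metis
  thus ?thesis by (metis insertE singletonD uminus_uminus_vec)
qed

theorem local_minimizers_are_two_global:
  "card {z. local_minimizer_on (obj A \<beta>) (unit_sphere n) z} = 2
     \<and> (\<forall>z. local_minimizer_on (obj A \<beta>) (unit_sphere n) z
          \<longrightarrow> global_minimizer_on (obj A \<beta>) (unit_sphere n) z)"
proof -
  have ne: "unit_sphere n \<inter> carrier_vec n \<noteq> {}" using v v_carrier by blast
  obtain w where w: "w \<in> unit_sphere n \<inter> carrier_vec n"
    and min: "\<And>y. y \<in> unit_sphere n \<inter> carrier_vec n \<Longrightarrow> obj A \<beta> w \<le> obj A \<beta> y"
    using unit_sphere_attains_min[where F = "obj A \<beta>", OF continuous_on_obj_vec[OF A_carrier] _ ne] by auto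
  have global: "global_minimizer_on (obj A \<beta>) (unit_sphere n) w"
    using w min unfolding global_minimizer_on_def unit_sphere_def by auto
  have global': "global_minimizer_on (obj A \<beta>) (unit_sphere n) (- w)"
    by (rule global_minimizer_on_uminus[OF A_carrier global])
  have minimizers: "{z. local_minimizer_on (obj A \<beta>) (unit_sphere n) z} = {w, - w}"
    using local_minimizer_eq_or_neg[OF _ global_imp_local_minimizer_on[OF global]]
      global_imp_local_minimizer_on[OF global] global_imp_local_minimizer_on[OF global'] by auto
  have "v \<bullet> w \<noteq> 0"
    by (rule scalar_prod_v_local_minimizer_nonzero[OF global_imp_local_minimizer_on[OF global]])
  moreover have "v \<bullet> w = - (v \<bullet> w)" if "w = - w"
    using arg_cong[OF that, of "(\<bullet>) v"] scalar_prod_v_uminus[of w] w by simp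
  ultimately have "w \<noteq> - w" by linarith
  moreover have "z = w \<or> z = - w" if "local_minimizer_on (obj A \<beta>) (unit_sphere n) z" for z
    using that minimizers by blast
  ultimately show ?thesis unfolding minimizers using global global' by auto
qed

end

lemma beta_condition_consequences:
  fixes \<beta> \<delta> \<rho> \<gamma> :: real
  assumes \<delta>: "\<delta> > 0" and \<gamma>: "\<gamma> > 0" and \<beta>: "\<beta> > 0" and \<rho>: "\<delta> \<le> \<rho>"
    and \<beta>_le: "\<beta> \<le> \<delta> / (2 * (7/3 + \<gamma>) + (2/3 + \<gamma>) * (\<rho> / \<delta>))"
  shows "16 * \<beta> \<le> 3 * \<delta>" "2 * \<beta>^2 * (\<delta> + \<rho>) + 2 * \<beta> * \<delta>^2 < \<delta>^3"
proof -
  define D where "D = 2 * (7/3 + \<gamma>) + (2/3 + \<gamma>) * (\<rho> / \<delta>)"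
  have D: "D * \<delta> = 14/3 * \<delta> + 2/3 * \<rho> + \<gamma> * (2 * \<delta> + \<rho>)"
    unfolding D_def using \<delta> by (simp add: field_simps)
  have "0 < D" unfolding D_def using \<delta> \<gamma> \<rho> by (intro add_pos_nonneg mult_nonneg_nonneg) auto
  hence "\<beta> * D * \<delta> \<le> \<delta> * \<delta>"
    using \<beta>_le \<delta> unfolding D_def[symmetric] by (simp add: pos_le_divide_eq)
  moreover have "0 \<le> \<beta> * (\<gamma> * (2 * \<delta> + \<rho>))" using \<beta> \<gamma> \<delta> \<rho> by simp
  ultimately have key: "\<beta> * (14 * \<delta> + 2 * \<rho>) \<le> 3 * \<delta>^2"
    unfolding mult.assoc D by (simp add: algebra_simps power2_eq_square)
  have "\<beta> * (16 * \<delta>) \<le> \<beta> * (14 * \<delta> + 2 * \<rho>)" using \<beta> \<rho> by simp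
  hence "16 * \<beta> * \<delta> \<le> 3 * \<delta> * \<delta>" using key by (simp add: power2_eq_square algebra_simps)
  thus "16 * \<beta> \<le> 3 * \<delta>" using \<delta> by simp
  have "2 * (\<beta>^2 * \<rho>) \<le> 3 * (\<beta> * \<delta>^2) - 14 * (\<beta>^2 * \<delta>)"
    using mult_left_mono[OF key, of \<beta>] \<beta> by (simp add: algebra_simps power2_eq_square)
  moreover have "0 < \<delta> * ((\<delta> - 5/2 * \<beta>)^2 + 23/4 * \<beta>^2)"
    using \<delta> \<beta> by (intro mult_pos_pos add_nonneg_pos) auto
  moreover have "\<delta> * ((\<delta> - 5/2 * \<beta>)^2 + 23/4 * \<beta>^2) = \<delta>^3 - 5 * (\<beta> * \<delta>^2) + 12 * (\<beta>^2 * \<delta>)"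
    by (simp add: algebra_simps power2_eq_square power3_eq_cube)
  moreover have "2 * \<beta>^2 * (\<delta> + \<rho>) + 2 * \<beta> * \<delta>^2 = 2 * (\<beta>^2 * \<delta>) + 2 * (\<beta>^2 * \<rho>) + 2 * (\<beta> * \<delta>^2)"
    by (simp add: algebra_simps)
  ultimately show "2 * \<beta>^2 * (\<delta> + \<rho>) + 2 * \<beta> * \<delta>^2 < \<delta>^3" by linarith
qed

theorem corollary2:
  fixes n :: nat and A :: "real mat" and lam :: "nat \<Rightarrow> real"
    and \<rho> \<delta> \<gamma> \<beta> :: real
  assumes n2: "n \<ge> 2"
    and A_carrier: "A \<in> carrier_mat n n"
    and A_sym: "A\<^sup>T = A"
    and eigs: "char_poly A = (\<Prod>i=1..n. [:- lam i, 1:])"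
    and sorted: "\<And>i j. 1 \<le> i \<Longrightarrow> i \<le> j \<Longrightarrow> j \<le> n \<Longrightarrow> lam j \<le> lam i"
    and rho_def: "\<rho> = lam 1 - lam n"
    and delta_def: "\<delta> = lam (n - 1) - lam n"
    and delta_pos: "\<delta> > 0"
    and gamma_pos: "\<gamma> > 0"
    and beta_pos: "\<beta> > 0"
    and beta_le: "\<beta> \<le> \<delta> / (2 * (7/3 + \<gamma>) + (2/3 + \<gamma>) * (\<rho> / \<delta>))"
  shows "card {z. local_minimizer_on (obj A \<beta>) (unit_sphere n) z} = 2
       \<and> (\<forall>z. local_minimizer_on (obj A \<beta>) (unit_sphere n) z
              \<longrightarrow> global_minimizer_on (obj A \<beta>) (unit_sphere n) z)"
proof -
  interpret sym_mat_spectrum n A lam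
    by unfold_locales (use A_carrier A_sym eigs sorted in auto)
  have "n \<in> {1..n}" using n2 by simp
  then obtain v where v: "v \<in> unit_sphere n" "A *\<^sub>v v = lam n \<cdot>\<^sub>v v" by (rule unit_eigenvector_exists)
  have "\<delta> \<le> \<rho>" using sorted[of 1 "n - 1"] n2 rho_def delta_def by auto
  note \<beta> = beta_condition_consequences[OF delta_pos gamma_pos beta_pos this beta_le]
  interpret quartic_sphere n A \<beta> "lam n" \<delta> \<rho> v
  proof unfold_locales
    fix y :: "real vec" assume "y \<in> carrier_vec n"
    thus "Q y y \<le> (lam n + \<rho>) * (y \<bullet> y)" using Q_le_top_eigenvalue n2 rho_def by simp
    assume "v \<bullet> y = 0"
    thus "(lam n + \<delta>) * (y \<bullet> y) \<le> Q y y"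
      using Q_ge_second_eigenvalue[OF n2 _ v \<open>y \<in> carrier_vec n\<close>] delta_def delta_pos by simp
  qed (use v delta_pos beta_pos \<beta> in auto)
  show ?thesis by (rule local_minimizers_are_two_global)
qed

end
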